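(* For all integers $i,j,k,m\ge0$: if $\omega_i+\omega_j-\omega_k-\omega_m=0$, or $\omega_i-\omega_j+\omega_k-\omega_m=0$, or $\omega_i-\omega_j-\omega_k+\omega_m=0$, then $C_{ijkm}=\omega_{\min\{i,j,k,m\}}$.
   Context: $\omega_n=n+1$ and $C_{ijkm}=\frac2\pi\int_{-1}^1U_i(y)U_j(y)U_k(y)U_m(y)\sqrt{1-y^2}\,dy$, $U_n$ the Chebyshev polynomial of the second kind of degree $n$. *)

theory Defs
  imports "HOL-Analysis.Analysis"
begin

fun chebU :: "nat \<Rightarrow> real \<Rightarrow> real" where
  "chebU 0 y = 1"
| "chebU (Suc 0) y = 2 * y"
| "chebU (Suc (Suc n)) y = 2 * y * chebU (Suc n) y - chebU n y"

definition omega :: "nat \<Rightarrow> real" where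
  "omega n = real n + 1"

definition Ccoef :: "nat \<Rightarrow> nat \<Rightarrow> nat \<Rightarrow> nat \<Rightarrow> real" where
  "Ccoef i j k m = 2 / pi * integral {-1..1}
     (\<lambda>y. chebU i y * chebU j y * chebU k y * chebU m y * sqrt (1 - y\<^sup>2))"

end

theory Submission
  imports Defs
begin

text \<open>The linearization
  U_a U_b = \<Sum>_{r \<le> min a b} U_{|a-b|+2r} turns C_ijkm into a double sum of integrals of
  U_p U_q against the weight sqrt(1 - y^2); by linearization once more and the vanishing of
  the weighted integral of every U_p with p > 0, the U_n are orthogonal with norm pi/2. Hence
  C_ijkm counts the pairs (r, s) with r \<le> min i j, s \<le> min k m and |i-j| + 2r = |k-m| + 2s.
  Each hypothesis is, up to the symmetry of C, the condition i + j = k + m, under which the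
  matching condition reads r + min k m = s + min i j; it has exactly
  min {i, j, k, m} + 1 solutions.\<close>

fun dchebU :: "nat \<Rightarrow> real \<Rightarrow> real" where
  "dchebU 0 y = 0"
| "dchebU (Suc 0) y = 2"
| "dchebU (Suc (Suc n)) y = 2 * chebU (Suc n) y + 2 * y * dchebU (Suc n) y - dchebU n y"

lemma has_real_derivative_chebU: "(chebU n has_real_derivative dchebU n y) (at y)"
proof (induction n arbitrary: y rule: induct_nat_012)
  case 0
  show ?case by (simp add: fun_eq_iff)
next
  case 1
  have "((\<lambda>y. 2 * y) has_real_derivative 2) (at y)"
    by (auto intro!: derivative_eq_intros)
  then show ?case by (simp add: fun_eq_iff)
next
  case (ge2 n)
  have "chebU (Suc (Suc n)) = (\<lambda>y. 2 * y * chebU (Suc n) y - chebU n y)"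
    by (simp add: fun_eq_iff)
  then show ?case
    using ge2.IH by (auto intro!: derivative_eq_intros)
qed

lemma continuous_on_chebU [continuous_intros]: "continuous_on S (chebU n)"
  by (meson DERIV_isCont has_real_derivative_chebU continuous_at_imp_continuous_on)

lemma chebU_deriv_identity:
  "(1 - y\<^sup>2) * dchebU n y - y * chebU n y = (real n + 1) * (y * chebU n y - chebU (Suc n) y)"
proof (induction n rule: induct_nat_012)
  case (ge2 n)
  have "(1 - y\<^sup>2) * dchebU (Suc (Suc n)) y - y * chebU (Suc (Suc n)) y
      = 2 * y * ((1 - y\<^sup>2) * dchebU (Suc n) y - y * chebU (Suc n) y)
        - ((1 - y\<^sup>2) * dchebU n y - y * chebU n y) + 2 * (1 - y\<^sup>2) * chebU (Suc n) y"
    by (simp add: algebra_simps power2_eq_square)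
  also have "\<dots> = 2 * y * ((real n + 2) * (y * chebU (Suc n) y - chebU (Suc (Suc n)) y))
        - (real n + 1) * (y * chebU n y - chebU (Suc n) y) + 2 * (1 - y\<^sup>2) * chebU (Suc n) y"
    using ge2.IH by (simp add: add.commute)
  also have "\<dots> = (real (Suc (Suc n)) + 1) * (y * chebU (Suc (Suc n)) y - chebU (Suc (Suc (Suc n))) y)"
    by (simp add: algebra_simps power2_eq_square)
  finally show ?case .
qed (simp_all add: power2_eq_square algebra_simps)

text \<open>With y = cos \<theta>, sqrt (1 - y^2) U_n(y) = sin ((n + 1) \<theta>), so this is the chain rule for
  sin ((n + 1) \<theta>) / (n + 1), and the antiderivative below is that of sin ((q + 2) \<theta>) sin \<theta>.\<close>

lemma has_real_derivative_sqrt_weight_chebU: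
  assumes "\<bar>y\<bar> < 1"
  shows "((\<lambda>y. sqrt (1 - y\<^sup>2) * chebU n y / (real n + 1)) has_real_derivative
           (y * chebU n y - chebU (Suc n) y) / sqrt (1 - y\<^sup>2)) (at y)"
proof -
  have pos: "0 < 1 - y\<^sup>2"
    using assms by (simp add: abs_square_less_1)
  have "((\<lambda>y. sqrt (1 - y\<^sup>2) * chebU n y) has_real_derivative
          ((1 - y\<^sup>2) * dchebU n y - y * chebU n y) / sqrt (1 - y\<^sup>2)) (at y)"
    using pos
    by (auto intro!: derivative_eq_intros has_real_derivative_chebU
             simp: field_simps real_sqrt_mult[symmetric])
  then have "((\<lambda>y. sqrt (1 - y\<^sup>2) * chebU n y / (real n + 1)) has_real_derivative
          (real n + 1) * (y * chebU n y - chebU (Suc n) y) / sqrt (1 - y\<^sup>2) / (real n + 1)) (at y)"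
    by (intro DERIV_cdivide) (simp add: chebU_deriv_identity)
  then show ?thesis
    by simp
qed

lemma has_integral_sqrt_one_minus_square: "((\<lambda>y. sqrt (1 - y\<^sup>2)) has_integral pi / 2) {-1..1}"
proof -
  define F where "F y = (y * sqrt (1 - y\<^sup>2) + arcsin y) / 2" for y :: real
  have "((\<lambda>y. sqrt (1 - y\<^sup>2)) has_integral F 1 - F (-1)) {-1..1}"
  proof (rule fundamental_theorem_of_calculus_interior)
    show "continuous_on {-1..1} F"
      unfolding F_def by (intro continuous_intros) (auto simp: abs_square_le_1)
  next
    fix y :: real
    assume y: "y \<in> {-1<..<1}"
    then have pos: "0 < 1 - y\<^sup>2"
      by (simp add: abs_square_less_1 abs_less_iff)
    have "(F has_real_derivative sqrt (1 - y\<^sup>2)) (at y)"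
      unfolding F_def[abs_def] using y pos
      by (auto intro!: derivative_eq_intros simp: field_simps power2_eq_square real_sqrt_mult[symmetric])
    then show "(F has_vector_derivative sqrt (1 - y\<^sup>2)) (at y)"
      by (simp add: has_real_derivative_iff_has_vector_derivative)
  qed simp
  moreover have "F 1 - F (-1) = pi / 2"
    by (simp add: F_def)
  ultimately show ?thesis
    by simp
qed

lemma has_integral_chebU_Suc_weight:
  "((\<lambda>y. chebU (Suc q) y * sqrt (1 - y\<^sup>2)) has_integral 0) {-1..1}"
proof -
  define S where "S n y = sqrt (1 - y\<^sup>2) * chebU n y / (real n + 1)" for n y
  define F where "F y = (S (q + 2) y - S q y) / 2" for y
  have "((\<lambda>y. chebU (Suc q) y * sqrt (1 - y\<^sup>2)) has_integral F 1 - F (-1)) {-1..1}"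
  proof (rule fundamental_theorem_of_calculus_interior)
    show "continuous_on {-1..1} F"
      unfolding F_def S_def by (intro continuous_intros) auto
  next
    fix y :: real
    assume "y \<in> {-1<..<1}"
    then have y: "\<bar>y\<bar> < 1"
      by auto
    then have sqrt_pos: "0 < sqrt (1 - y\<^sup>2)"
      by (simp add: abs_square_less_1)
    have "(S n has_real_derivative (y * chebU n y - chebU (Suc n) y) / sqrt (1 - y\<^sup>2)) (at y)"
      for n
      unfolding S_def[abs_def] using y by (rule has_real_derivative_sqrt_weight_chebU)
    then have "(F has_real_derivative
                 ((y * chebU (q + 2) y - chebU (Suc (q + 2)) y) / sqrt (1 - y\<^sup>2)
                  - (y * chebU q y - chebU (Suc q) y) / sqrt (1 - y\<^sup>2)) / 2) (at y)"
      unfolding F_def[abs_def] by (intro DERIV_cdivide DERIV_diff)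
    also have "((y * chebU (q + 2) y - chebU (Suc (q + 2)) y) / sqrt (1 - y\<^sup>2)
                  - (y * chebU q y - chebU (Suc q) y) / sqrt (1 - y\<^sup>2)) / 2
             = (1 - y\<^sup>2) * chebU (Suc q) y / sqrt (1 - y\<^sup>2)"
      using sqrt_pos by (simp add: numeral_eq_Suc field_simps power2_eq_square)
    also have "\<dots> = chebU (Suc q) y * sqrt (1 - y\<^sup>2)"
      using sqrt_pos by (simp add: field_simps)
    finally show "(F has_vector_derivative chebU (Suc q) y * sqrt (1 - y\<^sup>2)) (at y)"
      by (simp add: has_real_derivative_iff_has_vector_derivative)
  qed simp
  moreover have "F 1 - F (-1) = 0"
    by (simp add: F_def S_def)
  ultimately show ?thesis
    by simp
qed

lemma has_integral_chebU_weight: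
  "((\<lambda>y. chebU n y * sqrt (1 - y\<^sup>2)) has_integral (if n = 0 then pi / 2 else 0)) {-1..1}"
  using has_integral_sqrt_one_minus_square has_integral_chebU_Suc_weight[of "n - 1"]
  by (cases n) auto

lemma chebU_mult_shift: "chebU a y * chebU (a + d) y = (\<Sum>r\<le>a. chebU (d + 2 * r) y)"
proof (induction a arbitrary: d rule: induct_nat_012)
  case 0
  show ?case by simp
next
  case 1
  show ?case by (simp add: add.commute)
next
  case (ge2 a)
  have "chebU (Suc (Suc a)) y * chebU (Suc (Suc a) + d) y
      = chebU (Suc a) y * chebU (Suc a + (d + 2)) y + chebU (Suc a) y * chebU (Suc a + d) y
        - chebU a y * chebU (a + (d + 2)) y"
    by (simp add: algebra_simps)
  also have "\<dots> = (\<Sum>r\<le>Suc a. chebU (d + 2 + 2 * r) y) + (\<Sum>r\<le>Suc a. chebU (d + 2 * r) y)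
        - (\<Sum>r\<le>a. chebU (d + 2 + 2 * r) y)"
    by (simp only: ge2.IH)
  also have "\<dots> = (\<Sum>r\<le>Suc (Suc a). chebU (d + 2 * r) y)"
    by (simp add: algebra_simps)
  finally show ?case .
qed

lemma chebU_mult:
  "chebU a y * chebU b y = (\<Sum>r\<le>min a b. chebU (max a b - min a b + 2 * r) y)"
  using chebU_mult_shift[of a y "b - a"] chebU_mult_shift[of b y "a - b"]
  by (cases "a \<le> b") (simp_all add: mult.commute)

lemma chebU_orthogonal:
  "((\<lambda>y. chebU a y * chebU b y * sqrt (1 - y\<^sup>2)) has_integral (if a = b then pi / 2 else 0))
     {-1..1}"
proof -
  have "((\<lambda>y. \<Sum>r\<le>min a b. chebU (max a b - min a b + 2 * r) y * sqrt (1 - y\<^sup>2)) has_integral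
          (\<Sum>r\<le>min a b. if max a b - min a b + 2 * r = 0 then pi / 2 else 0)) {-1..1}"
    by (intro has_integral_sum has_integral_chebU_weight) auto
  moreover have "(\<Sum>r\<le>min a b. if max a b - min a b + 2 * r = 0 then pi / 2 else 0)
               = (\<Sum>r\<le>min a b. if r = 0 then (if a = b then pi / 2 else 0) else 0)"
    by (intro sum.cong) auto
  ultimately show ?thesis
    by (simp add: chebU_mult sum_distrib_right)
qed

lemma Ccoef_eq_sum_of_bool:
  "Ccoef i j k m = (\<Sum>r\<le>min i j. \<Sum>s\<le>min k m.
     of_bool (max i j - min i j + 2 * r = max k m - min k m + 2 * s))"
proof -
  let ?p = "\<lambda>r. max i j - min i j + 2 * r" and ?q = "\<lambda>s. max k m - min k m + 2 * s"
  have expand: "chebU i y * chebU j y * chebU k y * chebU m y * sqrt (1 - y\<^sup>2)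
      = (\<Sum>r\<le>min i j. \<Sum>s\<le>min k m. chebU (?p r) y * chebU (?q s) y * sqrt (1 - y\<^sup>2))" for y
  proof -
    have "chebU i y * chebU j y * chebU k y * chebU m y * sqrt (1 - y\<^sup>2)
        = (chebU i y * chebU j y) * (chebU k y * chebU m y) * sqrt (1 - y\<^sup>2)"
      by (simp add: ac_simps)
    also have "\<dots> = (\<Sum>r\<le>min i j. \<Sum>s\<le>min k m. chebU (?p r) y * chebU (?q s) y * sqrt (1 - y\<^sup>2))"
      unfolding chebU_mult[of i y j] chebU_mult[of k y m] sum_product
      by (simp only: sum_distrib_right)
    finally show ?thesis .
  qed
  have "((\<lambda>y. \<Sum>r\<le>min i j. \<Sum>s\<le>min k m. chebU (?p r) y * chebU (?q s) y * sqrt (1 - y\<^sup>2))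
      has_integral (\<Sum>r\<le>min i j. \<Sum>s\<le>min k m. pi / 2 * of_bool (?p r = ?q s))) {-1..1}"
    by (intro has_integral_sum) (auto intro: chebU_orthogonal[THEN has_integral_eq_rhs])
  then show ?thesis
    unfolding Ccoef_def expand by (simp add: integral_unique sum_distrib_left)
qed

lemma sum_of_bool_add_eq_add:
  "(\<Sum>r\<le>a. \<Sum>s\<le>c. of_bool (r + c = s + a)) = real (min a c) + 1"
proof -
  have "(\<Sum>s\<le>c. of_bool (r + c = s + a)) = (of_bool (a \<le> r + c) :: real)" if "r \<le> a" for r
  proof -
    have "(\<Sum>s\<le>c. of_bool (r + c = s + a))
        = (\<Sum>s\<le>c. if s = r + c - a then of_bool (a \<le> r + c) else (0 :: real))"
      by (intro sum.cong) auto
    also have "\<dots> = of_bool (a \<le> r + c)"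
      using that by (auto simp: sum.delta)
    finally show ?thesis .
  qed
  then have "(\<Sum>r\<le>a. \<Sum>s\<le>c. of_bool (r + c = s + a)) = (\<Sum>r\<le>a. of_bool (a \<le> r + c) :: real)"
    by (intro sum.cong) auto
  also have "\<dots> = real (card ({..a} \<inter> {r. a \<le> r + c}))"
    by (simp add: sum_of_bool_eq)
  also have "{..a} \<inter> {r. a \<le> r + c} = {a - c..a}"
    by auto
  finally show ?thesis
    by simp
qed

lemma Ccoef_eq_omega_Min:
  assumes "i + j = k + m"
  shows "Ccoef i j k m = omega (Min {i, j, k, m})"
proof -
  have "Ccoef i j k m = (\<Sum>r\<le>min i j. \<Sum>s\<le>min k m. of_bool (r + min k m = s + min i j))"
    unfolding Ccoef_eq_sum_of_bool using assms by (intro sum.cong refl arg_cong[where f = of_bool]) auto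
  also have "\<dots> = real (min (min i j) (min k m)) + 1"
    by (rule sum_of_bool_add_eq_add)
  finally show ?thesis
    by (simp add: omega_def min.assoc)
qed

theorem lemma5p2:
  fixes i j k m :: nat
  assumes "omega i + omega j - omega k - omega m = 0
        \<or> omega i - omega j + omega k - omega m = 0
        \<or> omega i - omega j - omega k + omega m = 0"
  shows "Ccoef i j k m = omega (Min {i, j, k, m})"
proof -
  have "Ccoef i j k m = Ccoef i k j m" "Ccoef i j k m = Ccoef i m j k"
    unfolding Ccoef_def by (simp_all add: ac_simps)
  moreover have "{i, k, j, m} = {i, j, k, m}" "{i, m, j, k} = {i, j, k, m}"
    by auto
  moreover from assms consider "i + j = k + m" | "i + k = j + m" | "i + m = j + k"
    unfolding omega_def by linarith
  ultimately show ?thesis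
    by cases (metis Ccoef_eq_omega_Min)+
qed

end
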